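(* Let $\mathcal{O}$ be a nonsymmetric operad and $\mathcal{O}^{\mathrm{Dend}}$ the associated operad. Define $\varphi_n:\mathcal{O}^{\mathrm{Dend}}(n)\to\mathcal{O}(n)$ by $\varphi_n(f^{[1]},\dots,f^{[n]})=f^{[1]}+\cdots+f^{[n]}$. Then $\varphi=\{\varphi_n\}_{n\ge1}:\mathcal{O}^{\mathrm{Dend}}\to\mathcal{O}$ is a morphism of nonsymmetric operads. In particular, if $(\pi_\prec,\pi_\succ)$ is a dendriform-multiplication on $\mathcal{O}$, then $\varphi$ induces a morphism of Gerstenhaber algebras $\varphi_*:H^\bullet_{(\pi_\prec,\pi_\succ)}(\mathcal{O}^{\mathrm{Dend}})\to H^\bullet_{\pi_{\mathrm{Tot}}}(\mathcal{O})$, where $\pi_{\mathrm{Tot}}=\pi_\prec+\pi_\succ$.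
   Context: $\mathbf{k}$ is a commutative unital ring of characteristic $0$; a nonsymmetric operad consists of $\mathbf{k}$-modules $\mathcal{O}(n)$, bilinear partial compositions $\circ_i$ and unit $\mathds{1}$ with the usual axioms; a morphism of operads is a family of linear maps commuting with all $\circ_i$ and preserving units. $C_n=\{[1],\dots,[n]\}$ formal symbols; $\mathcal{O}^{\mathrm{Dend}}(n)=\mathbf{k}[C_n]\otimes\mathcal{O}(n)$ with elements $f=(f^{[1]},\dots,f^{[n]})$, $f^{[r]}\in\mathcal{O}(n)$; partial compositions $(f\circ_i^{\mathrm{Dend}}g)^{[r]}=f^{R_0[r]}\circ_i g^{R_i[r]}$ for $1\le r\le m+n-1$, where $R_0[r]=[r]$ if $r\le i-1$, $[i]$ if $i\le r\le i+n-1$, $[r-n+1]$ if $r\ge i+n$; $R_i[r]=[r-i+1]$ if $i\le r\le i+n-1$ and $[1]+\cdots+[n]$ otherwise, with $g^{[1]+\cdots+[n]}:=g^{[1]}+\cdots+g^{[n]}$; unit $\mathds{1}^{[1]}$. A dendriform-multiplication is a pair $(\pi_\prec,\pi_\succ)$ in $\mathcal{O}(2)$ with $\pi_\prec\circ_1\pi_\prec=\pi_\prec\circ_2(\pi_\prec+\pi_\succ)$, $\pi_\prec\circ_1\pi_\succ=\pi_\succ\circ_2\pi_\prec$, $\pi_\succ\circ_1(\pi_\prec+\pi_\succ)=\pi_\succ\circ_2\pi_\succ$; then $(\pi_\prec,\pi_\succ)$ is a multiplication (i.e. $\pi\circ_1\pi=\pi\circ_2\pi$) on $\mathcal{O}^{\mathrm{Dend}}$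 and $\pi_\prec+\pi_\succ$ is a multiplication on $\mathcal{O}$. For an operad $\mathcal{P}$ with multiplication $\pi$: $\llbracket f,g\rrbracket=\sum_{i=1}^m(-1)^{(n-1)(i-1)}f\circ_i g-(-1)^{(m-1)(n-1)}\sum_{i=1}^n(-1)^{(m-1)(i-1)}g\circ_i f$ ($f\in\mathcal{P}(m)$, $g\in\mathcal{P}(n)$), $f\smile_\pi g=(-1)^{mn+1}(\pi\circ_2 g)\circ_1 f$, $\delta_\pi=\llbracket\pi,-\rrbracket$, and $H^\bullet_\pi(\mathcal{P})$ is the cohomology of $(\mathcal{P}(n),\delta_\pi)_{n\ge1}$, which is a Gerstenhaber algebra (graded-commutative associative product of degree $0$ plus a degree $-1$ graded Lie bracket satisfying the graded Leibniz rule) with product and bracket induced by $\smile_\pi$ and $\llbracket\,,\,\rrbracket$. $H^\bullet_{(\pi_\prec,\pi_\succ)}(\mathcal{O}^{\mathrm{Dend}})$ denotes $H^\bullet_{(\pi_\prec,\pi_\succ)}$ computed in $\mathcal{O}^{\mathrm{Dend}}$. A Gerstenhaber algebra morphism is a degree-preserving linear map preserving product and bracket. *)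

theory Defs
  imports Complex_Main "HOL-Library.Function_Algebras"
begin

text \<open>An operad is given by: a scalar action sc of the ring 'k on an ambient abelian
group 'a (a k-module), submodules P n (n \<ge> 1) of arity-n operations, partial compositions
cp m n i f g = f \<circ>_i g (for f of arity m, g of arity n, 1 \<le> i \<le> m), and a unit u.\<close>

definition ns_operad ::
  "('k::comm_ring_1 \<Rightarrow> 'a::ab_group_add \<Rightarrow> 'a) \<Rightarrow> (nat \<Rightarrow> 'a set)
   \<Rightarrow> (nat \<Rightarrow> nat \<Rightarrow> nat \<Rightarrow> 'a \<Rightarrow> 'a \<Rightarrow> 'a) \<Rightarrow> 'a \<Rightarrow> bool" where
  "ns_operad sc P cp u \<longleftrightarrow>
     module sc \<and>
     (\<forall>n\<ge>1. 0 \<in> P n \<and> (\<forall>x\<in>P n. \<forall>y\<in>P n. x + y \<in> P n) \<and> (\<forall>c. \<forall>x\<in>P n. sc c x \<in> P n)) \<and>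
     u \<in> P 1 \<and>
     (\<forall>m n i f g. 1 \<le> n \<longrightarrow> 1 \<le> i \<longrightarrow> i \<le> m \<longrightarrow> f \<in> P m \<longrightarrow> g \<in> P n \<longrightarrow>
        cp m n i f g \<in> P (m + n - 1)) \<and>
     (\<forall>m n i f f' g. 1 \<le> n \<longrightarrow> 1 \<le> i \<longrightarrow> i \<le> m \<longrightarrow> f \<in> P m \<longrightarrow> f' \<in> P m \<longrightarrow> g \<in> P n \<longrightarrow>
        cp m n i (f + f') g = cp m n i f g + cp m n i f' g) \<and>
     (\<forall>m n i f g g'. 1 \<le> n \<longrightarrow> 1 \<le> i \<longrightarrow> i \<le> m \<longrightarrow> f \<in> P m \<longrightarrow> g \<in> P n \<longrightarrow> g' \<in> P n \<longrightarrow>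
        cp m n i f (g + g') = cp m n i f g + cp m n i f g') \<and>
     (\<forall>m n i c f g. 1 \<le> n \<longrightarrow> 1 \<le> i \<longrightarrow> i \<le> m \<longrightarrow> f \<in> P m \<longrightarrow> g \<in> P n \<longrightarrow>
        cp m n i (sc c f) g = sc c (cp m n i f g) \<and> cp m n i f (sc c g) = sc c (cp m n i f g)) \<and>
     \<comment> \<open>sequential associativity: (f \<circ>_i g) \<circ>_{i+j-1} h = f \<circ>_i (g \<circ>_j h)\<close>
     (\<forall>m n p i j f g h. 1 \<le> n \<longrightarrow> 1 \<le> p \<longrightarrow> 1 \<le> i \<longrightarrow> i \<le> m \<longrightarrow> 1 \<le> j \<longrightarrow> j \<le> n \<longrightarrow>
        f \<in> P m \<longrightarrow> g \<in> P n \<longrightarrow> h \<in> P p \<longrightarrow>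
        cp (m + n - 1) p (i + j - 1) (cp m n i f g) h = cp m (n + p - 1) i f (cp n p j g h)) \<and>
     \<comment> \<open>parallel associativity: (f \<circ>_i g) \<circ>_{k+n-1} h = (f \<circ>_k h) \<circ>_i g for i < k\<close>
     (\<forall>m n p i k f g h. 1 \<le> n \<longrightarrow> 1 \<le> p \<longrightarrow> 1 \<le> i \<longrightarrow> i < k \<longrightarrow> k \<le> m \<longrightarrow>
        f \<in> P m \<longrightarrow> g \<in> P n \<longrightarrow> h \<in> P p \<longrightarrow>
        cp (m + n - 1) p (k + n - 1) (cp m n i f g) h = cp (m + p - 1) n i (cp m p k f h) g) \<and>
     \<comment> \<open>unit axioms\<close>
     (\<forall>n f. 1 \<le> n \<longrightarrow> f \<in> P n \<longrightarrow> cp 1 n 1 u f = f) \<and>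
     (\<forall>m i f. 1 \<le> i \<longrightarrow> i \<le> m \<longrightarrow> f \<in> P m \<longrightarrow> cp m 1 i f u = f)"

definition ns_operad_hom ::
  "('k::comm_ring_1 \<Rightarrow> 'a::ab_group_add \<Rightarrow> 'a) \<Rightarrow> (nat \<Rightarrow> 'a set)
   \<Rightarrow> (nat \<Rightarrow> nat \<Rightarrow> nat \<Rightarrow> 'a \<Rightarrow> 'a \<Rightarrow> 'a) \<Rightarrow> 'a
   \<Rightarrow> ('k \<Rightarrow> 'b::ab_group_add \<Rightarrow> 'b) \<Rightarrow> (nat \<Rightarrow> 'b set)
   \<Rightarrow> (nat \<Rightarrow> nat \<Rightarrow> nat \<Rightarrow> 'b \<Rightarrow> 'b \<Rightarrow> 'b) \<Rightarrow> 'b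
   \<Rightarrow> (nat \<Rightarrow> 'a \<Rightarrow> 'b) \<Rightarrow> bool" where
  "ns_operad_hom sc1 P1 cp1 u1 sc2 P2 cp2 u2 F \<longleftrightarrow>
     (\<forall>n\<ge>1. \<forall>f\<in>P1 n. F n f \<in> P2 n) \<and>
     (\<forall>n\<ge>1. \<forall>f\<in>P1 n. \<forall>g\<in>P1 n. F n (f + g) = F n f + F n g) \<and>
     (\<forall>n\<ge>1. \<forall>c. \<forall>f\<in>P1 n. F n (sc1 c f) = sc2 c (F n f)) \<and>
     (\<forall>m n i f g. 1 \<le> n \<longrightarrow> 1 \<le> i \<longrightarrow> i \<le> m \<longrightarrow> f \<in> P1 m \<longrightarrow> g \<in> P1 n \<longrightarrow>
        F (m + n - 1) (cp1 m n i f g) = cp2 m n i (F m f) (F n g)) \<and>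
     F 1 u1 = u2"

text \<open>An element f = (f^[1],...,f^[n]) of P^Dend(n) is represented as a function
r \<mapsto> f^[r], with f^[r] \<in> P(n) for 1 \<le> r \<le> n and f^[r] = 0 otherwise.\<close>

definition dend_scale :: "('k \<Rightarrow> 'a \<Rightarrow> 'a) \<Rightarrow> 'k \<Rightarrow> (nat \<Rightarrow> 'a) \<Rightarrow> (nat \<Rightarrow> 'a)" where
  "dend_scale sc c f = (\<lambda>r. sc c (f r))"

definition dend_O :: "(nat \<Rightarrow> 'a::zero set) \<Rightarrow> nat \<Rightarrow> (nat \<Rightarrow> 'a) set" where
  "dend_O P n = {f. (\<forall>r\<in>{1..n}. f r \<in> P n) \<and> (\<forall>r. r \<notin> {1..n} \<longrightarrow> f r = 0)}"

definition R0 :: "nat \<Rightarrow> nat \<Rightarrow> nat \<Rightarrow> nat" where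
  "R0 n i r = (if r \<le> i - 1 then r else if r \<le> i + n - 1 then i else r - n + 1)"

definition dend_comp ::
  "(nat \<Rightarrow> nat \<Rightarrow> nat \<Rightarrow> 'a \<Rightarrow> 'a \<Rightarrow> 'a::comm_monoid_add)
   \<Rightarrow> nat \<Rightarrow> nat \<Rightarrow> nat \<Rightarrow> (nat \<Rightarrow> 'a) \<Rightarrow> (nat \<Rightarrow> 'a) \<Rightarrow> (nat \<Rightarrow> 'a)" where
  "dend_comp cp m n i f g = (\<lambda>r.
     if 1 \<le> r \<and> r \<le> m + n - 1 then
       cp m n i (f (R0 n i r))
         (if i \<le> r \<and> r \<le> i + n - 1 then g (r - i + 1) else (\<Sum>s = 1..n. g s))
     else 0)"

definition dend_unit :: "'a \<Rightarrow> (nat \<Rightarrow> 'a::zero)" where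
  "dend_unit u = (\<lambda>r. if r = 1 then u else 0)"

definition phi :: "nat \<Rightarrow> (nat \<Rightarrow> 'a::comm_monoid_add) \<Rightarrow> 'a" where
  "phi n f = (\<Sum>r = 1..n. f r)"

definition dend_pair :: "'a \<Rightarrow> 'a \<Rightarrow> (nat \<Rightarrow> 'a::zero)" where
  "dend_pair pl pr = (\<lambda>r. if r = 1 then pl else if r = 2 then pr else 0)"

definition dendriform_mult ::
  "(nat \<Rightarrow> 'a set) \<Rightarrow> (nat \<Rightarrow> nat \<Rightarrow> nat \<Rightarrow> 'a \<Rightarrow> 'a \<Rightarrow> 'a::ab_group_add) \<Rightarrow> 'a \<Rightarrow> 'a \<Rightarrow> bool" where
  "dendriform_mult P cp pl pr \<longleftrightarrow> pl \<in> P 2 \<and> pr \<in> P 2 \<and>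
     cp 2 2 1 pl pl = cp 2 2 2 pl (pl + pr) \<and>
     cp 2 2 1 pl pr = cp 2 2 2 pr pl \<and>
     cp 2 2 1 pr (pl + pr) = cp 2 2 2 pr pr"

definition sgnx :: "nat \<Rightarrow> 'a::group_add \<Rightarrow> 'a" where
  "sgnx e x = (if even e then x else - x)"

definition gbr :: "(nat \<Rightarrow> nat \<Rightarrow> nat \<Rightarrow> 'a \<Rightarrow> 'a \<Rightarrow> 'a::ab_group_add)
   \<Rightarrow> nat \<Rightarrow> nat \<Rightarrow> 'a \<Rightarrow> 'a \<Rightarrow> 'a" where
  "gbr cp m n f g =
     (\<Sum>i = 1..m. sgnx ((n - 1) * (i - 1)) (cp m n i f g))
     - sgnx ((m - 1) * (n - 1)) (\<Sum>i = 1..n. sgnx ((m - 1) * (i - 1)) (cp n m i g f))"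

definition cupp :: "(nat \<Rightarrow> nat \<Rightarrow> nat \<Rightarrow> 'a \<Rightarrow> 'a \<Rightarrow> 'a::ab_group_add)
   \<Rightarrow> 'a \<Rightarrow> nat \<Rightarrow> nat \<Rightarrow> 'a \<Rightarrow> 'a \<Rightarrow> 'a" where
  "cupp cp p m n f g = sgnx (m * n + 1) (cp (n + 1) m 1 (cp 2 n 2 p g) f)"

definition delta :: "(nat \<Rightarrow> nat \<Rightarrow> nat \<Rightarrow> 'a \<Rightarrow> 'a \<Rightarrow> 'a::ab_group_add)
   \<Rightarrow> 'a \<Rightarrow> nat \<Rightarrow> 'a \<Rightarrow> 'a" where
  "delta cp p n f = gbr cp 2 n p f"

definition cocycles :: "(nat \<Rightarrow> 'a set) \<Rightarrow> (nat \<Rightarrow> nat \<Rightarrow> nat \<Rightarrow> 'a \<Rightarrow> 'a \<Rightarrow> 'a::ab_group_add)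
   \<Rightarrow> 'a \<Rightarrow> nat \<Rightarrow> 'a set" where
  "cocycles P cp p n = {f \<in> P n. delta cp p n f = 0}"

text \<open>Coboundaries in degree n (the complex starts in degree 1, so B^1 = 0).\<close>
definition coboundaries :: "(nat \<Rightarrow> 'a set) \<Rightarrow> (nat \<Rightarrow> nat \<Rightarrow> nat \<Rightarrow> 'a \<Rightarrow> 'a \<Rightarrow> 'a::ab_group_add)
   \<Rightarrow> 'a \<Rightarrow> nat \<Rightarrow> 'a set" where
  "coboundaries P cp p n =
     (if 2 \<le> n then delta cp p (n - 1) ` P (n - 1) else {0})"

definition coh_class :: "(nat \<Rightarrow> 'a set) \<Rightarrow> (nat \<Rightarrow> nat \<Rightarrow> nat \<Rightarrow> 'a \<Rightarrow> 'a \<Rightarrow> 'a::ab_group_add)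
   \<Rightarrow> 'a \<Rightarrow> nat \<Rightarrow> 'a \<Rightarrow> 'a set" where
  "coh_class P cp p n f = (\<lambda>b. f + b) ` coboundaries P cp p n"

definition cohomology :: "(nat \<Rightarrow> 'a set) \<Rightarrow> (nat \<Rightarrow> nat \<Rightarrow> nat \<Rightarrow> 'a \<Rightarrow> 'a \<Rightarrow> 'a::ab_group_add)
   \<Rightarrow> 'a \<Rightarrow> nat \<Rightarrow> 'a set set" where
  "cohomology P cp p n = coh_class P cp p n ` cocycles P cp p n"

end

theory Submission
  imports Defs
begin

(*
  Summing the components of f \<circ>_i g, the block of components r = i, ..., i+n-1 contributes
  f^[i] \<circ>_i g^[r-i+1], which adds up to f^[i] \<circ>_i \<phi>(g), while every other component of f
  is composed with \<phi>(g) exactly once; by linearity of \<circ>_i the total is \<phi>(f) \<circ>_i \<phi>(g).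
  A map that is additive, commutes with partial compositions and sends the multiplication
  (\<pi>_\<prec>, \<pi>_\<succ>) to \<pi>_\<prec> + \<pi>_\<succ> commutes with the bracket, the cup product and the
  differential, so it maps cocycles to cocycles and coboundaries to coboundaries and
  descends to cohomology.
*)

lemma sgnx_add: "sgnx e (a + b) = sgnx e a + sgnx e (b::'a::ab_group_add)"
  by (simp add: sgnx_def)

lemma sgnx_uminus: "sgnx e (- a) = - sgnx e (a::'a::ab_group_add)"
  by (simp add: sgnx_def)

locale operad =
  fixes sc :: "'k::comm_ring_1 \<Rightarrow> 'a::ab_group_add \<Rightarrow> 'a"
    and P :: "nat \<Rightarrow> 'a set"
    and cp :: "nat \<Rightarrow> nat \<Rightarrow> nat \<Rightarrow> 'a \<Rightarrow> 'a \<Rightarrow> 'a"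
    and u :: 'a
  assumes ns_operad: "ns_operad sc P cp u"
begin

lemma module: "module sc"
  using ns_operad by (simp add: ns_operad_def)

lemma zero_mem: "1 \<le> n \<Longrightarrow> 0 \<in> P n"
  using ns_operad by (simp add: ns_operad_def)

lemma add_mem: "1 \<le> n \<Longrightarrow> x \<in> P n \<Longrightarrow> y \<in> P n \<Longrightarrow> x + y \<in> P n"
  using ns_operad by (simp add: ns_operad_def)

lemma scale_mem: "1 \<le> n \<Longrightarrow> x \<in> P n \<Longrightarrow> sc c x \<in> P n"
  using ns_operad by (simp add: ns_operad_def)

lemma uminus_mem: "1 \<le> n \<Longrightarrow> x \<in> P n \<Longrightarrow> - x \<in> P n"
  using scale_mem[of n x "- 1"] module.scale_minus_left[OF module, of 1 x]
    module.scale_one[OF module, of x]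
  by simp

lemma sum_mem: "1 \<le> n \<Longrightarrow> (\<And>x. x \<in> S \<Longrightarrow> h x \<in> P n) \<Longrightarrow> (\<Sum>x\<in>S. h x) \<in> P n"
  by (induct S rule: infinite_finite_induct) (auto simp: zero_mem add_mem)

lemma comp_mem:
  "1 \<le> n \<Longrightarrow> 1 \<le> i \<Longrightarrow> i \<le> m \<Longrightarrow> f \<in> P m \<Longrightarrow> g \<in> P n \<Longrightarrow> cp m n i f g \<in> P (m + n - 1)"
  using ns_operad by (simp add: ns_operad_def)

lemma comp_add_left:
  "1 \<le> n \<Longrightarrow> 1 \<le> i \<Longrightarrow> i \<le> m \<Longrightarrow> f \<in> P m \<Longrightarrow> f' \<in> P m \<Longrightarrow> g \<in> P n \<Longrightarrow>
   cp m n i (f + f') g = cp m n i f g + cp m n i f' g"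
  using ns_operad by (simp add: ns_operad_def)

lemma comp_add_right:
  "1 \<le> n \<Longrightarrow> 1 \<le> i \<Longrightarrow> i \<le> m \<Longrightarrow> f \<in> P m \<Longrightarrow> g \<in> P n \<Longrightarrow> g' \<in> P n \<Longrightarrow>
   cp m n i f (g + g') = cp m n i f g + cp m n i f g'"
  using ns_operad by (simp add: ns_operad_def)

lemma comp_zero_left: "1 \<le> n \<Longrightarrow> 1 \<le> i \<Longrightarrow> i \<le> m \<Longrightarrow> g \<in> P n \<Longrightarrow> cp m n i 0 g = 0"
  using comp_add_left[of n i m 0 0 g] zero_mem[of m] by simp

lemma comp_zero_right: "1 \<le> n \<Longrightarrow> 1 \<le> i \<Longrightarrow> i \<le> m \<Longrightarrow> f \<in> P m \<Longrightarrow> cp m n i f 0 = 0"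
  using comp_add_right[of n i m f 0 0] zero_mem[of n] by simp

lemma comp_uminus_left:
  assumes "1 \<le> n" "1 \<le> i" "i \<le> m" "f \<in> P m" "g \<in> P n"
  shows "cp m n i (- f) g = - cp m n i f g"
  using comp_add_left[of n i m f "- f" g] assms uminus_mem[of m f] comp_zero_left
  by (simp add: eq_neg_iff_add_eq_0 add.commute)

lemma comp_uminus_right:
  assumes "1 \<le> n" "1 \<le> i" "i \<le> m" "f \<in> P m" "g \<in> P n"
  shows "cp m n i f (- g) = - cp m n i f g"
  using comp_add_right[of n i m f g "- g"] assms uminus_mem[of n g] comp_zero_right
  by (simp add: eq_neg_iff_add_eq_0 add.commute)

lemma comp_sum_left:
  assumes "1 \<le> n" "1 \<le> i" "i \<le> m" "\<And>x. x \<in> S \<Longrightarrow> h x \<in> P m" "g \<in> P n"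
  shows "cp m n i (\<Sum>x\<in>S. h x) g = (\<Sum>x\<in>S. cp m n i (h x) g)"
  using assms
  by (induct S rule: infinite_finite_induct) (simp_all add: comp_zero_left comp_add_left sum_mem)

lemma comp_sum_right:
  assumes "1 \<le> n" "1 \<le> i" "i \<le> m" "f \<in> P m" "\<And>x. x \<in> S \<Longrightarrow> h x \<in> P n"
  shows "cp m n i f (\<Sum>x\<in>S. h x) = (\<Sum>x\<in>S. cp m n i f (h x))"
  using assms
  by (induct S rule: infinite_finite_induct) (simp_all add: comp_zero_right comp_add_right sum_mem)

lemma gbr_add_right:
  assumes "1 \<le> m" "1 \<le> n" "f \<in> P m" "g \<in> P n" "g' \<in> P n"
  shows "gbr cp m n f (g + g') = gbr cp m n f g + gbr cp m n f g'"
proof -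
  have "cp m n i f (g + g') = cp m n i f g + cp m n i f g'" if "1 \<le> i" "i \<le> m" for i
    using comp_add_right assms that by simp
  moreover have "cp n m i (g + g') f = cp n m i g f + cp n m i g' f" if "1 \<le> i" "i \<le> n" for i
    using comp_add_left assms that by simp
  ultimately show ?thesis
    by (simp add: gbr_def sgnx_add sum.distrib)
qed

lemma gbr_uminus_right:
  assumes "1 \<le> m" "1 \<le> n" "f \<in> P m" "g \<in> P n"
  shows "gbr cp m n f (- g) = - gbr cp m n f g"
proof -
  have "cp m n i f (- g) = - cp m n i f g" if "1 \<le> i" "i \<le> m" for i
    using comp_uminus_right assms that by simp
  moreover have "cp n m i (- g) f = - cp n m i g f" if "1 \<le> i" "i \<le> n" for i
    using comp_uminus_left assms that by simp
  ultimately show ?thesis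
    by (simp add: gbr_def sgnx_uminus sum_negf)
qed

lemma coboundaries_add:
  assumes p: "p \<in> P 2" and "a \<in> coboundaries P cp p n" "b \<in> coboundaries P cp p n"
  shows "a + b \<in> coboundaries P cp p n"
proof (cases "2 \<le> n")
  case True
  then obtain h h' where h: "h \<in> P (n - 1)" "h' \<in> P (n - 1)"
    and "a = delta cp p (n - 1) h" "b = delta cp p (n - 1) h'"
    using assms by (auto simp: coboundaries_def)
  then have "a + b = delta cp p (n - 1) (h + h')"
    using True p by (simp add: delta_def gbr_add_right)
  moreover have "h + h' \<in> P (n - 1)"
    using h True add_mem by simp
  ultimately show ?thesis
    using True by (auto simp: coboundaries_def)
qed (use assms in \<open>simp add: coboundaries_def\<close>)

lemma coboundaries_uminus:
  assumes p: "p \<in> P 2" and "a \<in> coboundaries P cp p n"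
  shows "- a \<in> coboundaries P cp p n"
proof (cases "2 \<le> n")
  case True
  then obtain h where h: "h \<in> P (n - 1)" and "a = delta cp p (n - 1) h"
    using assms by (auto simp: coboundaries_def)
  then have "- a = delta cp p (n - 1) (- h)"
    using True p by (simp add: delta_def gbr_uminus_right)
  moreover have "- h \<in> P (n - 1)"
    using h True uminus_mem by simp
  ultimately show ?thesis
    using True by (auto simp: coboundaries_def)
qed (use assms in \<open>simp add: coboundaries_def\<close>)

lemma coh_class_eqI:
  assumes p: "p \<in> P 2" and fg: "f - g \<in> coboundaries P cp p n"
  shows "coh_class P cp p n f = coh_class P cp p n g"
proof -
  have shift: "coh_class P cp p n x \<subseteq> coh_class P cp p n y"
    if xy: "x - y \<in> coboundaries P cp p n" for x y
  proof
    fix z assume "z \<in> coh_class P cp p n x"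
    then obtain b where b: "b \<in> coboundaries P cp p n" and "z = x + b"
      by (auto simp: coh_class_def)
    then show "z \<in> coh_class P cp p n y"
      using coboundaries_add[OF p xy b] unfolding coh_class_def
      by (auto intro!: image_eqI[where x = "(x - y) + b"])
  qed
  have "g - f \<in> coboundaries P cp p n"
    using coboundaries_uminus[OF p fg] by simp
  with fg show ?thesis
    using shift by blast
qed

end

locale composition_hom = operad sc P cp u
  for sc :: "'k::comm_ring_1 \<Rightarrow> 'a::ab_group_add \<Rightarrow> 'a" and P cp u +
  fixes P' :: "nat \<Rightarrow> 'b::ab_group_add set"
    and cp' :: "nat \<Rightarrow> nat \<Rightarrow> nat \<Rightarrow> 'b \<Rightarrow> 'b \<Rightarrow> 'b"
    and F :: "nat \<Rightarrow> 'b \<Rightarrow> 'a"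
  assumes src_zero_mem: "1 \<le> n \<Longrightarrow> 0 \<in> P' n"
    and src_add_mem: "1 \<le> n \<Longrightarrow> x \<in> P' n \<Longrightarrow> y \<in> P' n \<Longrightarrow> x + y \<in> P' n"
    and src_uminus_mem: "1 \<le> n \<Longrightarrow> x \<in> P' n \<Longrightarrow> - x \<in> P' n"
    and src_comp_mem: "1 \<le> n \<Longrightarrow> 1 \<le> i \<Longrightarrow> i \<le> m \<Longrightarrow> f \<in> P' m \<Longrightarrow> g \<in> P' n \<Longrightarrow>
      cp' m n i f g \<in> P' (m + n - 1)"
    and F_mem: "1 \<le> n \<Longrightarrow> x \<in> P' n \<Longrightarrow> F n x \<in> P n"
    and F_add: "1 \<le> n \<Longrightarrow> x \<in> P' n \<Longrightarrow> y \<in> P' n \<Longrightarrow> F n (x + y) = F n x + F n y"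
    and F_comp: "1 \<le> n \<Longrightarrow> 1 \<le> i \<Longrightarrow> i \<le> m \<Longrightarrow> f \<in> P' m \<Longrightarrow> g \<in> P' n \<Longrightarrow>
      F (m + n - 1) (cp' m n i f g) = cp m n i (F m f) (F n g)"
begin

lemma src_sum_mem: "1 \<le> n \<Longrightarrow> (\<And>x. x \<in> S \<Longrightarrow> h x \<in> P' n) \<Longrightarrow> (\<Sum>x\<in>S. h x) \<in> P' n"
  by (induct S rule: infinite_finite_induct) (auto simp: src_zero_mem src_add_mem)

lemma src_sgnx_mem: "1 \<le> n \<Longrightarrow> x \<in> P' n \<Longrightarrow> sgnx e x \<in> P' n"
  by (simp add: sgnx_def src_uminus_mem)

lemma F_zero: "1 \<le> n \<Longrightarrow> F n 0 = 0"
  using F_add[of n 0 0] src_zero_mem[of n] by simp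

lemma F_uminus: "1 \<le> n \<Longrightarrow> x \<in> P' n \<Longrightarrow> F n (- x) = - F n x"
  using F_add[of n x "- x"] F_zero[of n] src_uminus_mem[of n x]
  by (simp add: eq_neg_iff_add_eq_0 add.commute)

lemma F_diff: "1 \<le> n \<Longrightarrow> x \<in> P' n \<Longrightarrow> y \<in> P' n \<Longrightarrow> F n (x - y) = F n x - F n y"
  using F_add[of n x "- y"] F_uminus[of n y] src_uminus_mem[of n y] by simp

lemma F_sgnx: "1 \<le> n \<Longrightarrow> x \<in> P' n \<Longrightarrow> F n (sgnx e x) = sgnx e (F n x)"
  by (simp add: sgnx_def F_uminus)

lemma F_sum: "1 \<le> n \<Longrightarrow> (\<And>x. x \<in> S \<Longrightarrow> h x \<in> P' n) \<Longrightarrow> F n (\<Sum>x\<in>S. h x) = (\<Sum>x\<in>S. F n (h x))"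
  by (induct S rule: infinite_finite_induct) (simp_all add: F_zero F_add src_sum_mem)

lemma F_signed_sum:
  assumes "1 \<le> k" "\<And>i. i \<in> S \<Longrightarrow> x i \<in> P' k"
  shows "F k (\<Sum>i\<in>S. sgnx (e i) (x i)) = (\<Sum>i\<in>S. sgnx (e i) (F k (x i)))"
  using assms by (simp add: F_sum F_sgnx src_sgnx_mem)

lemma src_gbr_mem:
  assumes "1 \<le> m" "1 \<le> n" "f \<in> P' m" "g \<in> P' n"
  shows "gbr cp' m n f g \<in> P' (m + n - 1)"
proof -
  have "cp' n m i g f \<in> P' (m + n - 1)" if "1 \<le> i" "i \<le> n" for i
    using src_comp_mem[of m i n g f] assms that by (simp add: add.commute)
  then show ?thesis
    unfolding gbr_def diff_conv_add_uminus using assms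
    by (intro src_add_mem src_uminus_mem src_sgnx_mem src_sum_mem src_comp_mem) auto
qed

lemma F_gbr:
  assumes "1 \<le> m" "1 \<le> n" "f \<in> P' m" "g \<in> P' n"
  shows "F (m + n - 1) (gbr cp' m n f g) = gbr cp m n (F m f) (F n g)"
proof -
  define A where "A = (\<Sum>i = 1..m. sgnx ((n - 1) * (i - 1)) (cp' m n i f g))"
  define B where "B = (\<Sum>i = 1..n. sgnx ((m - 1) * (i - 1)) (cp' n m i g f))"
  have fg: "cp' m n i f g \<in> P' (m + n - 1)"
    "F (m + n - 1) (cp' m n i f g) = cp m n i (F m f) (F n g)" if "i \<in> {1..m}" for i
    using F_comp src_comp_mem assms that by simp_all
  have gf: "cp' n m i g f \<in> P' (m + n - 1)"
    "F (m + n - 1) (cp' n m i g f) = cp n m i (F n g) (F m f)" if "i \<in> {1..n}" for i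
    using F_comp[of m i n g f] src_comp_mem[of m i n g f] assms that by (simp_all add: add.commute)
  have "A \<in> P' (m + n - 1)" "B \<in> P' (m + n - 1)"
    unfolding A_def B_def using assms fg gf by (auto intro!: src_sum_mem src_sgnx_mem)
  moreover have "F (m + n - 1) A = (\<Sum>i = 1..m. sgnx ((n - 1) * (i - 1)) (cp m n i (F m f) (F n g)))"
    unfolding A_def using assms fg by (subst F_signed_sum) auto
  moreover have "F (m + n - 1) B = (\<Sum>i = 1..n. sgnx ((m - 1) * (i - 1)) (cp n m i (F n g) (F m f)))"
    unfolding B_def using assms gf by (subst F_signed_sum) auto
  ultimately show ?thesis
    unfolding gbr_def A_def[symmetric] B_def[symmetric]
    using assms by (simp add: F_diff F_sgnx src_sgnx_mem)
qed

lemma src_cupp_mem: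
  assumes "1 \<le> m" "1 \<le> n" "f \<in> P' m" "g \<in> P' n" "q \<in> P' 2"
  shows "cupp cp' q m n f g \<in> P' (m + n)"
proof -
  have "cp' 2 n 2 q g \<in> P' (n + 1)"
    using src_comp_mem[of n 2 2 q g] assms by simp
  then have "cp' (n + 1) m 1 (cp' 2 n 2 q g) f \<in> P' (m + n)"
    using src_comp_mem[of m 1 "n + 1" _ f] assms by (simp add: add.commute)
  then show ?thesis
    using assms by (simp add: cupp_def src_sgnx_mem)
qed

lemma F_cupp:
  assumes "1 \<le> m" "1 \<le> n" "f \<in> P' m" "g \<in> P' n" "q \<in> P' 2"
  shows "F (m + n) (cupp cp' q m n f g) = cupp cp (F 2 q) m n (F m f) (F n g)"
proof -
  have qg: "cp' 2 n 2 q g \<in> P' (n + 1)"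
    using src_comp_mem[of n 2 2 q g] assms by simp
  then have "cp' (n + 1) m 1 (cp' 2 n 2 q g) f \<in> P' (m + n)"
    and "F (m + n) (cp' (n + 1) m 1 (cp' 2 n 2 q g) f) = cp (n + 1) m 1 (cp 2 n 2 (F 2 q) (F n g)) (F m f)"
    using src_comp_mem[OF _ _ _ qg, of m 1 f] F_comp[OF _ _ _ qg, of m 1 f] F_comp[of n 2 2 q g] assms
    by (simp_all add: add.commute)
  then show ?thesis
    using assms by (simp add: cupp_def F_sgnx)
qed

end

locale mult_hom = composition_hom +
  fixes p' p
  assumes src_mult_mem: "p' \<in> P' 2"
    and F_mult: "F 2 p' = p"
begin

lemma mult_mem: "p \<in> P 2"
  using F_mem[of 2 p'] src_mult_mem F_mult by simp

lemma F_cocycles: "1 \<le> n \<Longrightarrow> f \<in> cocycles P' cp' p' n \<Longrightarrow> F n f \<in> cocycles P cp p n"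
  using F_gbr[of 2 n p' f] src_mult_mem F_mult F_zero[of "n + 1"]
  by (simp add: cocycles_def delta_def F_mem)

lemma src_coboundaries_mem:
  assumes "1 \<le> n" "b \<in> coboundaries P' cp' p' n"
  shows "b \<in> P' n"
proof (cases "2 \<le> n")
  case True
  then obtain h where "h \<in> P' (n - 1)" "b = gbr cp' 2 (n - 1) p' h"
    using assms by (auto simp: coboundaries_def delta_def)
  then show ?thesis
    using src_gbr_mem[of 2 "n - 1" p' h] src_mult_mem True by simp
qed (use assms src_zero_mem in \<open>simp add: coboundaries_def\<close>)

lemma F_coboundaries:
  assumes n: "1 \<le> n" and b: "b \<in> coboundaries P' cp' p' n"
  shows "F n b \<in> coboundaries P cp p n"
proof (cases "2 \<le> n")
  case True
  then obtain h where h: "h \<in> P' (n - 1)" and "b = delta cp' p' (n - 1) h"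
    using b by (auto simp: coboundaries_def)
  then have "F n b = delta cp p (n - 1) (F (n - 1) h)"
    using F_gbr[of 2 "n - 1" p' h] True src_mult_mem F_mult by (simp add: delta_def)
  moreover have "F (n - 1) h \<in> P (n - 1)"
    using F_mem h True by simp
  ultimately show ?thesis
    using True by (auto simp: coboundaries_def)
qed (use assms F_zero in \<open>simp add: coboundaries_def\<close>)

lemma F_coh_class_cong:
  assumes n: "1 \<le> n" and f: "f \<in> P' n" and f': "f' \<in> P' n"
    and eq: "coh_class P' cp' p' n f' = coh_class P' cp' p' n f"
  shows "coh_class P cp p n (F n f') = coh_class P cp p n (F n f)"
proof -
  \<comment> \<open>0 need not be a source coboundary (cp' is not assumed linear), so f' is compared
    with f through an arbitrary coboundary b'.\<close>
  have "0 \<in> P' (n - 1)" if "2 \<le> n"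
    using that src_zero_mem by simp
  then have "\<exists>b'. b' \<in> coboundaries P' cp' p' n"
    by (auto simp: coboundaries_def)
  then obtain b' where b': "b' \<in> coboundaries P' cp' p' n"
    by blast
  then have "f' + b' \<in> coh_class P' cp' p' n f'"
    by (auto simp: coh_class_def)
  then have "f' + b' \<in> coh_class P' cp' p' n f"
    by (simp only: eq)
  then obtain b where b: "b \<in> coboundaries P' cp' p' n" and "f' + b' = f + b"
    by (auto simp: coh_class_def)
  then have "F n f' + F n b' = F n f + F n b"
    using F_add n f f' src_coboundaries_mem b b' by metis
  then have "F n f' - F n f = F n b + - F n b'"
    by (simp add: algebra_simps)
  moreover have "F n b + - F n b' \<in> coboundaries P cp p n"
    by (intro coboundaries_add[OF mult_mem] coboundaries_uminus[OF mult_mem]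
        F_coboundaries n b b')
  ultimately have "F n f' - F n f \<in> coboundaries P cp p n"
    by simp
  then show ?thesis
    by (rule coh_class_eqI[OF mult_mem])
qed

definition induced_coh_map where
  "induced_coh_map n X =
     coh_class P cp p n (F n (SOME f. f \<in> P' n \<and> X = coh_class P' cp' p' n f))"

lemma induced_coh_map_coh_class:
  assumes n: "1 \<le> n" and f: "f \<in> P' n"
  shows "induced_coh_map n (coh_class P' cp' p' n f) = coh_class P cp p n (F n f)"
proof -
  define f' where "f' = (SOME f'. f' \<in> P' n \<and> coh_class P' cp' p' n f = coh_class P' cp' p' n f')"
  have "f' \<in> P' n \<and> coh_class P' cp' p' n f = coh_class P' cp' p' n f'"
    unfolding f'_def by (rule someI[where x = f]) (use f in simp)
  then show ?thesis
    unfolding induced_coh_map_def f'_def[symmetric] using F_coh_class_cong[OF n f] by simp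
qed

lemma exists_induced_coh_morphism:
  "\<exists>Phi.
     (\<forall>n\<ge>1. \<forall>X\<in>cohomology P' cp' p' n. Phi n X \<in> cohomology P cp p n) \<and>
     (\<forall>n\<ge>1. \<forall>f\<in>cocycles P' cp' p' n.
        Phi n (coh_class P' cp' p' n f) = coh_class P cp p n (F n f)) \<and>
     (\<forall>m\<ge>1. \<forall>n\<ge>1. \<forall>f\<in>cocycles P' cp' p' m. \<forall>g\<in>cocycles P' cp' p' n.
        Phi (m + n) (coh_class P' cp' p' (m + n) (cupp cp' p' m n f g))
          = coh_class P cp p (m + n) (cupp cp p m n (F m f) (F n g)) \<and>
        Phi (m + n - 1) (coh_class P' cp' p' (m + n - 1) (gbr cp' m n f g))
          = coh_class P cp p (m + n - 1) (gbr cp m n (F m f) (F n g)))"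
proof (intro exI[of _ induced_coh_map] conjI allI impI ballI)
  fix n X assume n: "1 \<le> n" and "X \<in> cohomology P' cp' p' n"
  then obtain f where f: "f \<in> cocycles P' cp' p' n" and "X = coh_class P' cp' p' n f"
    by (auto simp: cohomology_def)
  then show "induced_coh_map n X \<in> cohomology P cp p n"
    using F_cocycles[OF n f] induced_coh_map_coh_class[OF n]
    by (auto simp: cohomology_def cocycles_def)
next
  fix m n f g assume "1 \<le> m" "1 \<le> n" "f \<in> cocycles P' cp' p' m" "g \<in> cocycles P' cp' p' n"
  then show "induced_coh_map (m + n) (coh_class P' cp' p' (m + n) (cupp cp' p' m n f g))
      = coh_class P cp p (m + n) (cupp cp p m n (F m f) (F n g))"
    and "induced_coh_map (m + n - 1) (coh_class P' cp' p' (m + n - 1) (gbr cp' m n f g))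
      = coh_class P cp p (m + n - 1) (gbr cp m n (F m f) (F n g))"
    using src_cupp_mem[OF _ _ _ _ src_mult_mem] F_cupp[OF _ _ _ _ src_mult_mem] src_gbr_mem F_gbr
    by (simp_all add: induced_coh_map_coh_class cocycles_def F_mult)
qed (simp add: induced_coh_map_coh_class cocycles_def)

end

lemma R0_range:
  "1 \<le> n \<Longrightarrow> 1 \<le> i \<Longrightarrow> i \<le> m \<Longrightarrow> r \<in> {1..m + n - 1} \<Longrightarrow> R0 n i r \<in> {1..m}"
  by (auto simp: R0_def)

lemma R0_fibre:
  assumes "1 \<le> n" "1 \<le> i" "i \<le> m" "1 \<le> s" "s \<le> m"
  shows "{r \<in> {1..m + n - 1}. R0 n i r = s} =
    (if s < i then {s} else if s = i then {i..i + n - 1} else {s + n - 1})"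
  using assms by (auto simp: R0_def)

lemma phi_add: "phi n (f + g) = phi n f + phi n g"
  by (simp add: phi_def sum.distrib)

lemma phi_dend_pair: "phi 2 (dend_pair pl pr) = pl + pr"
  by (simp add: phi_def dend_pair_def numeral_2_eq_2)

context operad
begin

lemma dend_O_memD: "f \<in> dend_O P n \<Longrightarrow> r \<in> {1..n} \<Longrightarrow> f r \<in> P n"
  by (simp add: dend_O_def)

lemma dend_O_zero_mem: "1 \<le> n \<Longrightarrow> 0 \<in> dend_O P n"
  by (simp add: dend_O_def zero_mem)

lemma dend_O_add_mem: "1 \<le> n \<Longrightarrow> f \<in> dend_O P n \<Longrightarrow> g \<in> dend_O P n \<Longrightarrow> f + g \<in> dend_O P n"
  by (simp add: dend_O_def add_mem)

lemma dend_O_uminus_mem: "1 \<le> n \<Longrightarrow> f \<in> dend_O P n \<Longrightarrow> - f \<in> dend_O P n"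
  by (simp add: dend_O_def uminus_mem)

lemma dend_pair_mem: "pl \<in> P 2 \<Longrightarrow> pr \<in> P 2 \<Longrightarrow> dend_pair pl pr \<in> dend_O P 2"
  by (auto simp: dend_O_def dend_pair_def)

lemma phi_mem: "1 \<le> n \<Longrightarrow> f \<in> dend_O P n \<Longrightarrow> phi n f \<in> P n"
  unfolding phi_def by (rule sum_mem) (auto intro: dend_O_memD)

lemma dend_comp_mem:
  assumes "1 \<le> n" "1 \<le> i" "i \<le> m" "f \<in> dend_O P m" "g \<in> dend_O P n"
  shows "dend_comp cp m n i f g \<in> dend_O P (m + n - 1)"
proof -
  have "cp m n i (f (R0 n i r))
          (if i \<le> r \<and> r \<le> i + n - 1 then g (r - i + 1) else (\<Sum>s = 1..n. g s))
        \<in> P (m + n - 1)"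
    if "r \<in> {1..m + n - 1}" for r
    using assms that R0_range[OF assms(1-3) that] phi_mem[of n g]
    by (intro comp_mem) (auto intro: dend_O_memD simp: phi_def)
  then show ?thesis
    unfolding dend_O_def dend_comp_def by auto
qed

lemma phi_dend_comp:
  assumes n: "1 \<le> n" and i: "1 \<le> i" "i \<le> m" and "f \<in> dend_O P m" "g \<in> dend_O P n"
  shows "phi (m + n - 1) (dend_comp cp m n i f g) = cp m n i (phi m f) (phi n g)"
proof -
  define T where "T r = cp m n i (f (R0 n i r))
    (if i \<le> r \<and> r \<le> i + n - 1 then g (r - i + 1) else phi n g)" for r
  have fibre_sum: "(\<Sum>r \<in> {r \<in> {1..m + n - 1}. R0 n i r = s}. T r) = cp m n i (f s) (phi n g)"
    if s: "1 \<le> s" "s \<le> m" for s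
  proof (cases s i rule: linorder_cases)
    case less
    then show ?thesis
      unfolding R0_fibre[OF n i s] using s by (auto simp: T_def R0_def)
  next
    case equal
    have "(\<Sum>r = i..i + n - 1. T r) = (\<Sum>r = i..i + n - 1. cp m n i (f i) (g (r - i + 1)))"
      by (rule sum.cong) (use assms in \<open>auto simp: T_def R0_def\<close>)
    also have "\<dots> = cp m n i (f i) (\<Sum>r = i..i + n - 1. g (r - i + 1))"
      using assms by (intro comp_sum_right[symmetric]) (auto intro: dend_O_memD)
    also have "(\<Sum>r = i..i + n - 1. g (r - i + 1)) = phi n g"
      unfolding phi_def
      by (rule sum.reindex_bij_witness[where i = "\<lambda>s. s + i - 1" and j = "\<lambda>r. r - i + 1"])
        (use assms in auto)
    finally show ?thesis
      unfolding R0_fibre[OF n i s] using equal by simp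
  next
    case greater
    then show ?thesis
      unfolding R0_fibre[OF n i s] using s n by (auto simp: T_def R0_def)
  qed
  have "phi (m + n - 1) (dend_comp cp m n i f g) = (\<Sum>r = 1..m + n - 1. T r)"
    unfolding T_def phi_def dend_comp_def by simp
  also have "\<dots> = (\<Sum>s = 1..m. \<Sum>r \<in> {r \<in> {1..m + n - 1}. R0 n i r = s}. T r)"
    by (rule sum.group[symmetric]) (use R0_range assms in auto)
  also have "\<dots> = (\<Sum>s = 1..m. cp m n i (f s) (phi n g))"
    using fibre_sum by simp
  also have "\<dots> = cp m n i (phi m f) (phi n g)"
    unfolding phi_def[of m] using assms
    by (intro comp_sum_left[symmetric]) (auto intro: dend_O_memD phi_mem)
  finally show ?thesis .
qed

lemma phi_ns_operad_hom:
  "ns_operad_hom (dend_scale sc) (dend_O P) (dend_comp cp) (dend_unit u) sc P cp u phi"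
  unfolding ns_operad_hom_def
proof (intro conjI allI impI ballI)
  show "phi n (dend_scale sc c f) = sc c (phi n f)" for n c f
    by (simp add: phi_def dend_scale_def module.scale_sum_right[OF module])
  show "phi 1 (dend_unit u) = u"
    by (simp add: phi_def dend_unit_def)
qed (use phi_mem phi_add phi_dend_comp in blast)+

lemma phi_mult_hom:
  assumes "pl \<in> P 2" "pr \<in> P 2"
  shows "mult_hom sc P cp u (dend_O P) (dend_comp cp) phi (dend_pair pl pr) (pl + pr)"
  by unfold_locales
    (use assms in \<open>blast intro: dend_O_zero_mem dend_O_add_mem dend_O_uminus_mem dend_comp_mem
      phi_mem phi_add phi_dend_comp dend_pair_mem phi_dend_pair\<close>)+

end

theorem proposition4p6:
  fixes sc :: "'k::comm_ring_1 \<Rightarrow> 'a::ab_group_add \<Rightarrow> 'a"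
    and P :: "nat \<Rightarrow> 'a set"
    and cp :: "nat \<Rightarrow> nat \<Rightarrow> nat \<Rightarrow> 'a \<Rightarrow> 'a \<Rightarrow> 'a"
    and u :: 'a
  assumes char0: "CHAR('k) = 0"
    and op: "ns_operad sc P cp u"
  shows "ns_operad_hom (dend_scale sc) (dend_O P) (dend_comp cp) (dend_unit u) sc P cp u phi
    \<and> (\<forall>pl pr. dendriform_mult P cp pl pr \<longrightarrow>
         (\<exists>Phi :: nat \<Rightarrow> (nat \<Rightarrow> 'a) set \<Rightarrow> 'a set.
            (\<forall>n\<ge>1. \<forall>X\<in>cohomology (dend_O P) (dend_comp cp) (dend_pair pl pr) n.
               Phi n X \<in> cohomology P cp (pl + pr) n) \<and>
            (\<forall>n\<ge>1. \<forall>f\<in>cocycles (dend_O P) (dend_comp cp) (dend_pair pl pr) n.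
               Phi n (coh_class (dend_O P) (dend_comp cp) (dend_pair pl pr) n f)
                 = coh_class P cp (pl + pr) n (phi n f)) \<and>
            (\<forall>m\<ge>1. \<forall>n\<ge>1.
               \<forall>f\<in>cocycles (dend_O P) (dend_comp cp) (dend_pair pl pr) m.
               \<forall>g\<in>cocycles (dend_O P) (dend_comp cp) (dend_pair pl pr) n.
               Phi (m + n) (coh_class (dend_O P) (dend_comp cp) (dend_pair pl pr) (m + n)
                              (cupp (dend_comp cp) (dend_pair pl pr) m n f g))
                 = coh_class P cp (pl + pr) (m + n) (cupp cp (pl + pr) m n (phi m f) (phi n g))
             \<and> Phi (m + n - 1) (coh_class (dend_O P) (dend_comp cp) (dend_pair pl pr) (m + n - 1)
                              (gbr (dend_comp cp) m n f g))
                 = coh_class P cp (pl + pr) (m + n - 1) (gbr cp m n (phi m f) (phi n g)))))"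
proof -
  interpret operad sc P cp u
    by (rule operad.intro[OF op])
  have induced: "mult_hom sc P cp u (dend_O P) (dend_comp cp) phi (dend_pair pl pr) (pl + pr)"
    if "dendriform_mult P cp pl pr" for pl pr
    using that by (intro phi_mult_hom) (simp_all add: dendriform_mult_def)
  show ?thesis
    by (intro conjI allI impI phi_ns_operad_hom mult_hom.exists_induced_coh_morphism[OF induced])
qed

end
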